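(* Let $I$ DMUs have nonnegative, nonzero nominal output data $Y\in\mathbb{R}^{M\times I}$ and input data $X\in\mathbb{R}^{N\times I}$ and suppose the maximum allowed amount of box uncertainty is $\nu=\infty$. Then no DMU is incapable; that is, for every DMU $\hat\imath$ there exist $\sigma\ge0$ and perturbations $\Delta,\nabla$ with all entries in $[-\sigma,\sigma]$ and $Y+\Delta\ge0$, $X+\nabla\ge0$ such that the efficiency score of DMU $\hat\imath$ computed from the data $(Y+\Delta,X+\nabla)$ equals $1$.
   Context: Input-oriented BCC DEA: the efficiency score of DMU $k$ with data $(X,Y)$ is $\min\{\theta: Y\lambda\ge y^k,\ X\lambda\le\theta x^k,\ e^T\lambda=1,\ \lambda\ge0\}$, $e$ the all-ones vector. A DMU is capable under box uncertainty with bound $\nu$ if, for some amount $\sigma\in[0,\nu]$, some realisation of the data within the box of size $\sigma$ (every entry within $\sigma$ of its nominal value, data kept nonnegative) makes its efficiency score equal to $1$; it is incapable otherwise. *)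

theory Defs
  imports Complex_Main "HOL-Library.Extended_Real"
begin

text \<open>Data matrices are functions on indices: Y m i (m < M outputs), X n i (n < N inputs),
  DMUs i < I.\<close>

definition bcc_feasible ::
  "(nat \<Rightarrow> nat \<Rightarrow> real) \<Rightarrow> (nat \<Rightarrow> nat \<Rightarrow> real) \<Rightarrow> nat \<Rightarrow> nat \<Rightarrow> nat \<Rightarrow> nat \<Rightarrow> real \<Rightarrow> bool" where
  "bcc_feasible X Y N M I k \<theta> \<longleftrightarrow>
     (\<exists>lam::nat \<Rightarrow> real.
        (\<forall>i<I. lam i \<ge> 0) \<and> (\<Sum>i<I. lam i) = 1 \<and>
        (\<forall>m<M. (\<Sum>i<I. Y m i * lam i) \<ge> Y m k) \<and>
        (\<forall>n<N. (\<Sum>i<I. X n i * lam i) \<le> \<theta> * X n k))"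

definition bcc_eff ::
  "(nat \<Rightarrow> nat \<Rightarrow> real) \<Rightarrow> (nat \<Rightarrow> nat \<Rightarrow> real) \<Rightarrow> nat \<Rightarrow> nat \<Rightarrow> nat \<Rightarrow> nat \<Rightarrow> real" where
  "bcc_eff X Y N M I k = Inf {\<theta>. bcc_feasible X Y N M I k \<theta>}"

definition capable ::
  "(nat \<Rightarrow> nat \<Rightarrow> real) \<Rightarrow> (nat \<Rightarrow> nat \<Rightarrow> real) \<Rightarrow> nat \<Rightarrow> nat \<Rightarrow> nat \<Rightarrow> ereal \<Rightarrow> nat \<Rightarrow> bool" where
  "capable X Y N M I \<nu> k \<longleftrightarrow>
     (\<exists>\<sigma>::real. 0 \<le> \<sigma> \<and> ereal \<sigma> \<le> \<nu> \<and>
       (\<exists>D E :: nat \<Rightarrow> nat \<Rightarrow> real.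
          (\<forall>m<M. \<forall>i<I. \<bar>D m i\<bar> \<le> \<sigma> \<and> Y m i + D m i \<ge> 0) \<and>
          (\<forall>n<N. \<forall>i<I. \<bar>E n i\<bar> \<le> \<sigma> \<and> X n i + E n i \<ge> 0) \<and>
          bcc_eff (\<lambda>n i. X n i + E n i) (\<lambda>m i. Y m i + D m i) N M I k = 1))"

end

theory Submission
  imports Defs
begin

text \<open>Perturb the data so that DMU k becomes the only producer of every output, while every
  input stays positive. A feasible combination must then put weight at least 1 on k, hence
  all its weight, and the input constraint forces \<open>\<theta> \<ge> 1\<close>; \<open>\<theta> = 1\<close> itself is attained by k
  alone. With \<open>\<nu> = \<infinity>\<close> the size of such a perturbation is irrelevant, and the nonzero-data
  hypotheses serve only to guarantee at least one output and one input.\<close>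

lemma convex_weights_eq_0_if_ge_1:
  fixes lam :: "nat \<Rightarrow> real"
  assumes "k < I" "\<forall>i<I. lam i \<ge> 0" "(\<Sum>i<I. lam i) = 1" "lam k \<ge> 1" "i < I" "i \<noteq> k"
  shows "lam i = 0"
proof -
  have "(\<Sum>i<I. lam i) = lam k + lam i + (\<Sum>j\<in>{..<I}-{k}-{i}. lam j)"
    using assms(1,5,6) by (simp add: sum.remove[of _ k] sum.remove[of _ i])
  moreover have "(\<Sum>j\<in>{..<I}-{k}-{i}. lam j) \<ge> 0"
    using assms(2) by (intro sum_nonneg) auto
  ultimately show ?thesis
    using assms(2-5) by force
qed

lemma bcc_feasible_1:
  assumes "k < I"
  shows "bcc_feasible X Y N M I k 1"
  unfolding bcc_feasible_def
  by (rule exI[of _ "\<lambda>i. if i = k then 1 else 0"])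
    (use assms in \<open>auto simp: if_distrib sum.If_cases\<close>)

lemma bcc_feasible_ge_1_if_sole_producer:
  assumes k: "k < I"
    and m0: "m0 < M" "Y m0 k > 0" "\<forall>i<I. i \<noteq> k \<longrightarrow> Y m0 i = 0"
    and n0: "n0 < N" "X n0 k > 0"
    and feasible: "bcc_feasible X Y N M I k \<theta>"
  shows "\<theta> \<ge> 1"
proof -
  obtain lam where nonneg: "\<forall>i<I. lam i \<ge> 0" and sum_1: "(\<Sum>i<I. lam i) = 1"
    and outputs: "\<forall>m<M. (\<Sum>i<I. Y m i * lam i) \<ge> Y m k"
    and inputs: "\<forall>n<N. (\<Sum>i<I. X n i * lam i) \<le> \<theta> * X n k"
    using feasible unfolding bcc_feasible_def by blast
  have "Y m0 k * 1 \<le> (\<Sum>i<I. Y m0 i * lam i)"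
    using outputs m0(1) by simp
  also have "\<dots> = Y m0 k * lam k"
    using k m0(3) by (simp add: sum.remove[of _ k])
  finally have "lam k \<ge> 1"
    using m0(2) by (simp only: mult_le_cancel_left_pos)
  then have unit: "lam i = 0" if "i < I" "i \<noteq> k" for i
    using convex_weights_eq_0_if_ge_1[OF k nonneg sum_1] that by blast
  have "lam k = 1"
    using k unit sum_1 by (simp add: sum.remove[of _ k])
  have "X n0 k * 1 = (\<Sum>i<I. X n0 i * lam i)"
    using k unit \<open>lam k = 1\<close> by (simp add: sum.remove[of _ k])
  also have "\<dots> \<le> X n0 k * \<theta>"
    using inputs n0(1) by (simp add: mult.commute)
  finally show ?thesis
    using n0(2) by (simp only: mult_le_cancel_left_pos)
qed

lemma bcc_eff_eq_1_if_sole_producer: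
  assumes "k < I"
    and "m0 < M" "Y m0 k > 0" "\<forall>i<I. i \<noteq> k \<longrightarrow> Y m0 i = 0"
    and "n0 < N" "X n0 k > 0"
  shows "bcc_eff X Y N M I k = 1"
  unfolding bcc_eff_def
proof (rule cInf_eq_minimum)
  show "1 \<in> {\<theta>. bcc_feasible X Y N M I k \<theta>}"
    using bcc_feasible_1[OF assms(1)] by simp
next
  fix \<theta> assume "\<theta> \<in> {\<theta>. bcc_feasible X Y N M I k \<theta>}"
  then show "1 \<le> \<theta>"
    using bcc_feasible_ge_1_if_sole_producer[where X = X and Y = Y, OF assms] by simp
qed

lemma abs_le_double_sum:
  fixes Y :: "nat \<Rightarrow> nat \<Rightarrow> real"
  assumes "m < M" "i < I"
  shows "\<bar>Y m i\<bar> \<le> (\<Sum>m<M. \<Sum>i<I. \<bar>Y m i\<bar>)"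
proof -
  have "\<bar>Y m i\<bar> \<le> (\<Sum>i<I. \<bar>Y m i\<bar>)"
    using assms(2) by (intro member_le_sum) auto
  also have "\<dots> \<le> (\<Sum>m<M. \<Sum>i<I. \<bar>Y m i\<bar>)"
    using assms(1) by (intro member_le_sum[where f = "\<lambda>m. \<Sum>i<I. \<bar>Y m i\<bar>"]) (auto intro: sum_nonneg)
  finally show ?thesis .
qed

theorem theorem2:
  fixes X Y :: "nat \<Rightarrow> nat \<Rightarrow> real" and N M I :: nat
  assumes Ynn: "\<forall>m<M. \<forall>i<I. Y m i \<ge> 0"
    and Xnn: "\<forall>n<N. \<forall>i<I. X n i \<ge> 0"
    and Ynz: "\<exists>m<M. \<exists>i<I. Y m i \<noteq> 0"
    and Xnz: "\<exists>n<N. \<exists>i<I. X n i \<noteq> 0"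
  shows "\<forall>k<I. capable X Y N M I \<infinity> k"
proof (intro allI impI)
  fix k assume k: "k < I"
  obtain m0 n0 where "m0 < M" "n0 < N"
    using Ynz Xnz by blast
  define \<sigma> where "\<sigma> = 1 + (\<Sum>m<M. \<Sum>i<I. \<bar>Y m i\<bar>)"
  define D where "D m i = (if i = k then 1 else - Y m i)" for m i
  define E :: "nat \<Rightarrow> nat \<Rightarrow> real" where "E n i = 1" for n i
  have "\<sigma> \<ge> 1"
    unfolding \<sigma>_def by (simp add: sum_nonneg)
  moreover have "\<forall>m<M. \<forall>i<I. \<bar>D m i\<bar> \<le> \<sigma> \<and> Y m i + D m i \<ge> 0"
  proof (intro allI impI conjI)
    fix m i assume "m < M" "i < I"
    then show "\<bar>D m i\<bar> \<le> \<sigma>"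
      using abs_le_double_sum[of m M i I Y] \<open>\<sigma> \<ge> 1\<close> unfolding D_def \<sigma>_def by simp
    show "Y m i + D m i \<ge> 0"
      using Ynn \<open>m < M\<close> \<open>i < I\<close> by (simp add: D_def)
  qed
  moreover have "\<forall>n<N. \<forall>i<I. \<bar>E n i\<bar> \<le> \<sigma> \<and> X n i + E n i \<ge> 0"
    using Xnn \<open>\<sigma> \<ge> 1\<close> by (auto simp: E_def)
  moreover have "bcc_eff (\<lambda>n i. X n i + E n i) (\<lambda>m i. Y m i + D m i) N M I k = 1"
    using \<open>m0 < M\<close> \<open>n0 < N\<close> k Ynn Xnn
    by (intro bcc_eff_eq_1_if_sole_producer) (auto simp: D_def E_def add_nonneg_pos)
  ultimately show "capable X Y N M I \<infinity> k"
    unfolding capable_def by (intro exI[of _ \<sigma>]) auto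
qed

end
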